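(* Let $C\subseteq V(K_n\times K_m)$ satisfy: (1) there exist $1\le n_1<n_2<n_3\le n$ and $1\le m_1<m_2<m_3\le m$ with $(n_1,m_1),(n_2,m_2),(n_3,m_3)\in C$; (2) every $v\in C$ is row-isolated or column-isolated in $C$; (3) $rs(C)=m-1$ and $cs(C)=n$; (4) at most one vertex of $C$ is isolated in $C$; (5) for every row $R_r$ such that every $v\in C\cap R_r$ is column-isolated but not row-isolated in $C$, we have $|C\cap R_r|\ge 3$. Then $C$ is an identifying code of $K_n\times K_m$.
   Context: $K_n\times K_m$ is the direct product of complete graphs: vertex set $[n]\times[m]$, with $(i,r)$ adjacent to $(j,s)$ iff $i\ne j$ and $r \ne s$. An identifying code is a dominating set $C$ with $N[x]\cap C\ne N[y]\cap C$ for all distinct vertices $x,y$ ($N[x]$ the closed neighborhood). Columns: $C_i=\{(i,t):t\in[m]\}$; rows: $R_r=\{(k,r):k\in[n]\}$. $cs(C)$ (resp. $rs(C)$) is the number of columns (resp. rows) meeting $C$. A vertex $v=(i,r)$ is column-isolated in $C$ if $C\cap C_i=\{v\}$, row-isolated in $C$ if $C\cap R_r=\{v\}$, and isolated in $C$ if both. *)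

theory Defs
  imports Main
begin

definition verts :: "nat \<Rightarrow> nat \<Rightarrow> (nat \<times> nat) set" where
  "verts n m = {1..n} \<times> {1..m}"

definition adj :: "nat \<times> nat \<Rightarrow> nat \<times> nat \<Rightarrow> bool" where
  "adj x y \<longleftrightarrow> fst x \<noteq> fst y \<and> snd x \<noteq> snd y"

definition cnbhd :: "nat \<Rightarrow> nat \<Rightarrow> nat \<times> nat \<Rightarrow> (nat \<times> nat) set" where
  "cnbhd n m x = {y \<in> verts n m. adj x y} \<union> {x}"

definition dominating :: "nat \<Rightarrow> nat \<Rightarrow> (nat \<times> nat) set \<Rightarrow> bool" where
  "dominating n m C \<longleftrightarrow> C \<subseteq> verts n m \<and> (\<forall>x \<in> verts n m. cnbhd n m x \<inter> C \<noteq> {})"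

definition identifying_code :: "nat \<Rightarrow> nat \<Rightarrow> (nat \<times> nat) set \<Rightarrow> bool" where
  "identifying_code n m C \<longleftrightarrow> dominating n m C \<and>
     (\<forall>x \<in> verts n m. \<forall>y \<in> verts n m. x \<noteq> y \<longrightarrow> cnbhd n m x \<inter> C \<noteq> cnbhd n m y \<inter> C)"

definition col :: "nat \<Rightarrow> nat \<Rightarrow> (nat \<times> nat) set" where
  "col m i = {(i, t) | t. t \<in> {1..m}}"

definition row :: "nat \<Rightarrow> nat \<Rightarrow> (nat \<times> nat) set" where
  "row n r = {(k, r) | k. k \<in> {1..n}}"

definition cs :: "nat \<Rightarrow> nat \<Rightarrow> (nat \<times> nat) set \<Rightarrow> nat" where
  "cs n m C = card {i \<in> {1..n}. C \<inter> col m i \<noteq> {}}"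

definition rs :: "nat \<Rightarrow> nat \<Rightarrow> (nat \<times> nat) set \<Rightarrow> nat" where
  "rs n m C = card {r \<in> {1..m}. C \<inter> row n r \<noteq> {}}"

definition col_isolated :: "nat \<Rightarrow> (nat \<times> nat) set \<Rightarrow> nat \<times> nat \<Rightarrow> bool" where
  "col_isolated m C v \<longleftrightarrow> C \<inter> col m (fst v) = {v}"

definition row_isolated :: "nat \<Rightarrow> (nat \<times> nat) set \<Rightarrow> nat \<times> nat \<Rightarrow> bool" where
  "row_isolated n C v \<longleftrightarrow> C \<inter> row n (snd v) = {v}"

definition isolated :: "nat \<Rightarrow> nat \<Rightarrow> (nat \<times> nat) set \<Rightarrow> nat \<times> nat \<Rightarrow> bool" where
  "isolated n m C v \<longleftrightarrow> row_isolated n C v \<and> col_isolated m C v"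

end

theory Submission
  imports Defs
begin

(* Write N[x] for the closed neighbourhood of x in K_n x K_m.
   Domination: among three code vertices with pairwise distinct rows and
   columns, at most one shares a column and at most one shares a row with a
   given vertex x, so one of them is adjacent to x.
   Separation of distinct x = (i,r), y = (j,s):
   - if x, y lie in one column, a code vertex in row r or row s (one of the two
     rows meets C, as only one row is empty) lies in exactly one of N[x], N[y];
     symmetrically for one row, since every column meets C;
   - if i ~= j and r ~= s, then N[x] and N[y] agree on C exactly when every code
     vertex in columns i, j or rows r, s lies in the box {i,j} x {r,s}.  Each of
     the two columns then meets the box in exactly one vertex (two vertices in one
     column would be row-isolated and empty the other column).  If these two
     vertices share a row, that row violates hypothesis (5); otherwise both are
     isolated, violating hypothesis (4). *)

lemma row_inter: "C \<subseteq> verts n m \<Longrightarrow> C \<inter> row n r = {z \<in> C. snd z = r}"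
  by (auto simp: row_def verts_def)

lemma col_inter: "C \<subseteq> verts n m \<Longrightarrow> C \<inter> col m i = {z \<in> C. fst z = i}"
  by (auto simp: col_def verts_def)

lemma row_isolated_iff:
  "C \<subseteq> verts n m \<Longrightarrow> row_isolated n C v \<longleftrightarrow> {z \<in> C. snd z = snd v} = {v}"
  unfolding row_isolated_def by (simp add: row_inter)

lemma col_isolated_iff:
  "C \<subseteq> verts n m \<Longrightarrow> col_isolated m C v \<longleftrightarrow> {z \<in> C. fst z = fst v} = {v}"
  unfolding col_isolated_def by (simp add: col_inter)

lemma cnbhd_member:
  "z \<in> verts n m \<Longrightarrow> z \<in> cnbhd n m x \<longleftrightarrow> z = x \<or> (fst z \<noteq> fst x \<and> snd z \<noteq> snd x)"
  unfolding cnbhd_def adj_def by auto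

lemma every_column_meets:
  assumes sub: "C \<subseteq> verts n m" and csC: "cs n m C = n" and i: "i \<in> {1..n}"
  obtains t where "(i, t) \<in> C"
proof -
  let ?A = "{i \<in> {1..n}. C \<inter> col m i \<noteq> {}}"
  have "?A \<subseteq> {1..n}" and "card ?A = card {1..n}"
    using csC unfolding cs_def by auto
  then have "?A = {1..n}" by (simp add: card_subset_eq)
  then have "C \<inter> col m i \<noteq> {}" using i by auto
  then show thesis using that by (auto simp: col_inter[OF sub])
qed

lemma one_of_two_rows_meets:
  assumes rsC: "rs n m C = m - 1" and r: "r \<in> {1..m}" and s: "s \<in> {1..m}" and "r \<noteq> s"
  obtains k t where "(k, t) \<in> C" and "t = r \<or> t = s"
proof -
  let ?B = "{r \<in> {1..m}. C \<inter> row n r \<noteq> {}}"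
  have "C \<inter> row n r \<noteq> {} \<or> C \<inter> row n s \<noteq> {}"
  proof (rule ccontr)
    assume "\<not> ?thesis"
    then have "?B \<subseteq> {1..m} - {r, s}" by auto
    then have "card ?B \<le> card ({1..m} - {r, s})" by (intro card_mono) auto
    also have "\<dots> = m - 2" using assms by (subst card_Diff_subset) auto
    finally have "m - 1 \<le> m - 2" using rsC unfolding rs_def by simp
    moreover have "m \<ge> 2" using r s \<open>r \<noteq> s\<close> by auto
    ultimately show False by simp
  qed
  then show thesis using that by (auto simp: row_def)
qed

lemma dominating_if_three_independent:
  assumes sub: "C \<subseteq> verts n m" and abc: "a \<in> C" "b \<in> C" "c \<in> C"
    and cols: "fst a \<noteq> fst b" "fst a \<noteq> fst c" "fst b \<noteq> fst c"
    and rows: "snd a \<noteq> snd b" "snd a \<noteq> snd c" "snd b \<noteq> snd c"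
  shows "dominating n m C"
  unfolding dominating_def
proof (intro conjI ballI sub)
  fix x assume "x \<in> verts n m"
  text \<open>At most one of a, b, c shares the column of x and at most one shares its row.\<close>
  have "\<exists>p \<in> {a, b, c}. fst p \<noteq> fst x \<and> snd p \<noteq> snd x"
    using cols rows by (metis insertCI)
  then obtain p where "p \<in> C" and "fst p \<noteq> fst x \<and> snd p \<noteq> snd x"
    using abc by blast
  moreover have "p \<in> verts n m" using \<open>p \<in> C\<close> sub by blast
  ultimately have "p \<in> cnbhd n m x \<inter> C" by (simp add: cnbhd_member)
  then show "cnbhd n m x \<inter> C \<noteq> {}" by blast
qed

text \<open>Two vertices of one column are told apart by a code vertex in one of their rows.\<close>
lemma separates_in_column:
  assumes sub: "C \<subseteq> verts n m" and rsC: "rs n m C = m - 1"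
    and "r \<in> {1..m}" "s \<in> {1..m}" "r \<noteq> s"
  shows "cnbhd n m (i, r) \<inter> C \<noteq> cnbhd n m (i, s) \<inter> C"
proof -
  obtain k t where z: "(k, t) \<in> C" "t = r \<or> t = s"
    using one_of_two_rows_meets[OF rsC assms(3-5)] .
  then have "(k, t) \<in> verts n m" using sub by blast
  then have "(k, t) \<in> cnbhd n m (i, r) \<longleftrightarrow> (k, t) \<notin> cnbhd n m (i, s)"
    using z(2) \<open>r \<noteq> s\<close> by (auto simp: cnbhd_member)
  then show ?thesis using z(1) by blast
qed

text \<open>Two vertices of one row are told apart by a code vertex in one of their columns.\<close>
lemma separates_in_row:
  assumes sub: "C \<subseteq> verts n m" and csC: "cs n m C = n"
    and "j \<in> {1..n}" "i \<noteq> j"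
  shows "cnbhd n m (i, r) \<inter> C \<noteq> cnbhd n m (j, r) \<inter> C"
proof -
  obtain t where z: "(j, t) \<in> C" using every_column_meets[OF sub csC assms(3)] .
  then have "(j, t) \<in> verts n m" using sub by blast
  then have "(j, t) \<in> cnbhd n m (i, r) \<longleftrightarrow> (j, t) \<notin> cnbhd n m (j, r)"
    using \<open>i \<noteq> j\<close> by (auto simp: cnbhd_member)
  then show ?thesis using z by blast
qed

lemma twins_confine_lines_to_box:
  assumes sub: "C \<subseteq> verts n m"
    and twins: "cnbhd n m (i, r) \<inter> C = cnbhd n m (j, s) \<inter> C"
    and "i \<noteq> j" "r \<noteq> s" and z: "(k, t) \<in> C" and "k = i \<or> k = j \<or> t = r \<or> t = s"
  shows "k \<in> {i, j} \<and> t \<in> {r, s}"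
proof -
  have "(k, t) \<in> cnbhd n m (i, r) \<longleftrightarrow> (k, t) \<in> cnbhd n m (j, s)"
    using twins z by blast
  moreover have "(k, t) \<in> verts n m" using z sub by blast
  ultimately show ?thesis using assms(3-6) by (auto simp: cnbhd_member)
qed

lemma isolated_unique:
  assumes "finite C" and one_iso: "card {v \<in> C. isolated n m C v} \<le> 1"
    and "u \<in> C" "w \<in> C" "isolated n m C u" "isolated n m C w"
  shows "u = w"
proof -
  have "card {u, w} \<le> card {v \<in> C. isolated n m C v}"
    by (rule card_mono) (use assms in auto)
  then have "card {u, w} \<le> 1" using one_iso by linarith
  then show ?thesis by (cases "u = w") simp_all
qed

lemma no_row_of_two_column_isolated:
  assumes sub: "C \<subseteq> verts n m"
    and rows: "\<forall>r \<in> {1..m}. C \<inter> row n r \<noteq> {} \<and>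
                 (\<forall>v \<in> C \<inter> row n r. col_isolated m C v \<and> \<not> row_isolated n C v)
                 \<longrightarrow> card (C \<inter> row n r) \<ge> 3"
    and "q \<in> {1..m}" "a \<noteq> b" and R: "C \<inter> row n q = {(a, q), (b, q)}"
    and "col_isolated m C (a, q)" "col_isolated m C (b, q)"
  shows False
proof -
  have "col_isolated m C v \<and> \<not> row_isolated n C v" if "v \<in> C \<inter> row n q" for v
  proof -
    have v: "v = (a, q) \<or> v = (b, q)" using that R by blast
    have "C \<inter> row n (snd v) \<noteq> {v}"
    proof
      assume "C \<inter> row n (snd v) = {v}"
      then have "(a, q) = v" "(b, q) = v" using R v by auto
      then show False using \<open>a \<noteq> b\<close> by auto
    qed
    then show ?thesis using v assms(6,7) unfolding row_isolated_def by blast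
  qed
  then have "card (C \<inter> row n q) \<ge> 3"
    using rows \<open>q \<in> {1..m}\<close> R by blast
  then show False using R \<open>a \<noteq> b\<close> by simp
qed

text \<open>Two code vertices in one column of the box would both be row-isolated and
  leave no code vertex for the other column.\<close>
lemma box_column_single:
  assumes sub: "C \<subseteq> verts n m"
    and iso: "\<forall>v \<in> C. row_isolated n C v \<or> col_isolated m C v"
    and box: "\<And>k t. (k, t) \<in> C \<Longrightarrow> k = i \<or> k = j \<or> t = r \<or> t = s \<Longrightarrow> k \<in> {i, j} \<and> t \<in> {r, s}"
    and "i \<noteq> j" "r \<noteq> s" and ir: "(i, r) \<in> C" and is_: "(i, s) \<in> C" and jt: "(j, t) \<in> C"
  shows False
proof -
  have "{z \<in> C. fst z = i} \<noteq> {(i, r)}" "{z \<in> C. fst z = i} \<noteq> {(i, s)}"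
    using ir is_ \<open>r \<noteq> s\<close> by (auto simp: set_eq_iff)
  then have "\<not> col_isolated m C (i, r)" "\<not> col_isolated m C (i, s)"
    by (simp_all add: col_isolated_iff[OF sub])
  then have "row_isolated n C (i, r)" "row_isolated n C (i, s)"
    using iso ir is_ by blast+
  then have "{z \<in> C. snd z = r} = {(i, r)}" "{z \<in> C. snd z = s} = {(i, s)}"
    by (simp_all add: row_isolated_iff[OF sub])
  then have "(j, r) \<notin> C" "(j, s) \<notin> C"
    using \<open>i \<noteq> j\<close> by (auto simp: set_eq_iff)
  moreover have "t \<in> {r, s}" using box[OF jt] by simp
  ultimately show False using jt by auto
qed

lemma no_code_confined_to_box:
  assumes sub: "C \<subseteq> verts n m"
    and iso: "\<forall>v \<in> C. row_isolated n C v \<or> col_isolated m C v"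
    and one_iso: "card {v \<in> C. isolated n m C v} \<le> 1"
    and rows: "\<forall>r \<in> {1..m}. C \<inter> row n r \<noteq> {} \<and>
                 (\<forall>v \<in> C \<inter> row n r. col_isolated m C v \<and> \<not> row_isolated n C v)
                 \<longrightarrow> card (C \<inter> row n r) \<ge> 3"
    and "i \<noteq> j" "r \<noteq> s" "r \<in> {1..m}" "s \<in> {1..m}"
    and box: "\<And>k t. (k, t) \<in> C \<Longrightarrow> k = i \<or> k = j \<or> t = r \<or> t = s \<Longrightarrow> k \<in> {i, j} \<and> t \<in> {r, s}"
    and it: "(i, ti) \<in> C" and jt: "(j, tj) \<in> C"
  shows False
proof -
  have box': "\<And>k t. (k, t) \<in> C \<Longrightarrow> k = j \<or> k = i \<or> t = r \<or> t = s \<Longrightarrow> k \<in> {j, i} \<and> t \<in> {r, s}"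
    using box by blast
  have ti: "ti \<in> {r, s}" and tj: "tj \<in> {r, s}" using box it jt by auto
  have col_i: "{z \<in> C. fst z = i} = {(i, ti)}"
    using box_column_single[OF sub iso box \<open>i \<noteq> j\<close> \<open>r \<noteq> s\<close> _ _ jt] box it ti by fastforce
  have col_j: "{z \<in> C. fst z = j} = {(j, tj)}"
    using box_column_single[OF sub iso box' \<open>i \<noteq> j\<close>[symmetric] \<open>r \<noteq> s\<close> _ _ it] box jt tj by fastforce
  have ci: "col_isolated m C (i, ti)" and cj: "col_isolated m C (j, tj)"
    using col_i col_j by (simp_all add: col_isolated_iff[OF sub])
  have row_in_box: "z = (i, snd z) \<or> z = (j, snd z)" if "z \<in> C" "snd z \<in> {r, s}" for z
    using box[of "fst z" "snd z"] that by (cases z) auto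
  show False
  proof (cases "ti = tj")
    case True
    have "C \<inter> row n ti = {(i, ti), (j, ti)}"
      using row_in_box it jt True ti by (auto simp: row_inter[OF sub])
    then show False
      using no_row_of_two_column_isolated[OF sub rows _ \<open>i \<noteq> j\<close>] ci cj True ti assms(7,8) by auto
  next
    case False
    have "(j, ti) \<notin> C"
    proof
      assume "(j, ti) \<in> C"
      then have "(j, ti) \<in> {z \<in> C. fst z = j}" by simp
      then show False using col_j False by simp
    qed
    moreover have "(i, tj) \<notin> C"
    proof
      assume "(i, tj) \<in> C"
      then have "(i, tj) \<in> {z \<in> C. fst z = i}" by simp
      then show False using col_i False by simp
    qed
    ultimately have "{z \<in> C. snd z = ti} = {(i, ti)}" "{z \<in> C. snd z = tj} = {(j, tj)}"
      using row_in_box it jt ti tj by fastforce+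
    then have "isolated n m C (i, ti)" "isolated n m C (j, tj)"
      using ci cj by (simp_all add: isolated_def row_isolated_iff[OF sub])
    moreover have "finite C" using sub finite_subset unfolding verts_def by blast
    ultimately have "(i, ti) = (j, tj)" using isolated_unique[OF _ one_iso it jt] by blast
    then show False using \<open>i \<noteq> j\<close> by simp
  qed
qed

theorem mainTheorem13:
  fixes n m :: nat and C :: "(nat \<times> nat) set"
  assumes sub: "C \<subseteq> verts n m"
    and diag: "\<exists>n1 n2 n3 m1 m2 m3. 1 \<le> n1 \<and> n1 < n2 \<and> n2 < n3 \<and> n3 \<le> n \<and>
                 1 \<le> m1 \<and> m1 < m2 \<and> m2 < m3 \<and> m3 \<le> m \<and>
                 (n1, m1) \<in> C \<and> (n2, m2) \<in> C \<and> (n3, m3) \<in> C"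
    and iso: "\<forall>v \<in> C. row_isolated n C v \<or> col_isolated m C v"
    and rsC: "rs n m C = m - 1"
    and csC: "cs n m C = n"
    and one_iso: "card {v \<in> C. isolated n m C v} \<le> 1"
    and rows: "\<forall>r \<in> {1..m}. C \<inter> row n r \<noteq> {} \<and> (\<forall>v \<in> C \<inter> row n r. col_isolated m C v \<and> \<not> row_isolated n C v)
                 \<longrightarrow> card (C \<inter> row n r) \<ge> 3"
  shows "identifying_code n m C"
proof -
  have dom: "dominating n m C"
    using diag dominating_if_three_independent[OF sub] by fastforce
  have "cnbhd n m (i, r) \<inter> C \<noteq> cnbhd n m (j, s) \<inter> C"
    if x: "(i, r) \<in> verts n m" and y: "(j, s) \<in> verts n m" and xy: "(i, r) \<noteq> (j, s)"
    for i r j s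
  proof (cases "i = j \<or> r = s")
    case True
    then show ?thesis
      using x y xy separates_in_column[OF sub rsC] separates_in_row[OF sub csC]
      by (auto simp: verts_def)
  next
    case False
    show ?thesis
    proof
      assume twins: "cnbhd n m (i, r) \<inter> C = cnbhd n m (j, s) \<inter> C"
      obtain ti tj where "(i, ti) \<in> C" "(j, tj) \<in> C"
        using every_column_meets[OF sub csC] x y by (metis mem_Sigma_iff verts_def)
      moreover have "r \<in> {1..m}" "s \<in> {1..m}" using x y by (auto simp: verts_def)
      ultimately show False
        using no_code_confined_to_box[OF sub iso one_iso rows _ _ _ _
            twins_confine_lines_to_box[OF sub twins]] False by blast
    qed
  qed
  then show ?thesis unfolding identifying_code_def using dom by auto
qed

end
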